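(* In the setting and notation of the context, there is $\delta>0$ such that $V$ is analytic in $D(1,\delta)\setminus[1-\delta,1]$, satisfies $W(x)=V_-(x)V_-(x)^\ast=V_+(x)V_+(x)^\ast$ for $x\in(1-\delta,1)$, and \[W(z)=V(z)\,\mathrm{diag}(e^{-\alpha_1\pi i},\dots,e^{-\alpha_r\pi i})\,V(\bar z)^\ast\quad\text{for }z\in D(1,\delta),\ \mathrm{Im}\,z>0,\] \[W(z)=V(z)\,\mathrm{diag}(e^{\alpha_1\pi i},\dots,e^{\alpha_r\pi i})\,V(\bar z)^\ast\quad\text{for }z\in D(1,\delta),\ \mathrm{Im}\,z<0,\] where $W(z)=(1-z)^\alpha(1+z)^\beta H(z)$ (principal branches) is the analytic continuation of $W$.
   Context: Fix $r\ge1$, $\alpha,\beta>-1$ and $H:[-1,1]\to\mathbb C^{r\times r}$ with $H(x)$ Hermitian positive definite for $x\in(-1,1)$, $H$ real analytic on $[-1,1]$ (analytically continued to a complex neighborhood, still denoted $H$), and $H(\pm1)$ not the zero matrix. Put $W(x)=(1-x)^\alpha(1+x)^\beta H(x)$. Fix $H=Q\Lambda Q^\ast$ on $[-1,1]$ with $Q$ unitary, $\Lambda=\mathrm{diag}(\lambda_1,\dots,\lambda_r)$, $Q,\Lambda$ real analytic (continued analytically to a convex neighborhood $N$ of $[-1,1]$ where no $\lambda_j$ vanishes except possibly at $\pm1$). $n_j$ is the order of vanishing of $\lambda_j$ at $1$ (zero if $\lambda_j(1)>0$), $\alpha_j=\alpha+n_j$. With $\widetilde\lambda_j=(-1)^{n_j}\lambda_j$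 and $\widetilde\lambda_j^{1/2}$ the continuation to $N\setminus(-\infty,1]$ of the positive square root on $(1,1+\delta)$, $V(z)=(z-1)^{\alpha/2}(z+1)^{\beta/2}Q(z)\mathrm{diag}(\widetilde\lambda_1(z)^{1/2},\dots,\widetilde\lambda_r(z)^{1/2})$ (principal branches). $V_\pm(x)=\lim_{\varepsilon\to0+}V(x\pm i\varepsilon)$; $D(1,\delta)$ is the open disk of radius $\delta$ about $1$. *)

theory Defs
  imports "HOL-Complex_Analysis.Complex_Analysis"
begin

text \<open>r x r complex matrices are modelled as complex^'r^'r with 'r a finite index type.\<close>

definition adjoint_mat :: "complex^'r^'r \<Rightarrow> complex^'r^'r" where
  "adjoint_mat A = (\<chi> i j. cnj (A $ j $ i))"

definition diag_mat :: "('r::finite \<Rightarrow> complex) \<Rightarrow> complex^'r^'r" where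
  "diag_mat d = (\<chi> i j. if i = j then d i else 0)"

definition smat :: "complex \<Rightarrow> complex^'r^'r \<Rightarrow> complex^'r^'r" where
  "smat c A = (\<chi> i j. c * A $ i $ j)"

definition unitary_mat :: "complex^'r^'r \<Rightarrow> bool" where
  "unitary_mat U \<longleftrightarrow> adjoint_mat U ** U = mat 1"

definition herm_pos_def :: "complex^'r^'r \<Rightarrow> bool" where
  "herm_pos_def A \<longleftrightarrow> adjoint_mat A = A \<and>
     (\<forall>v::complex^'r. v \<noteq> 0 \<longrightarrow>
        (let q = (\<Sum>i\<in>UNIV. \<Sum>j\<in>UNIV. cnj (v $ i) * A $ i $ j * v $ j) in Im q = 0 \<and> Re q > 0))"

definition mat_analytic_on :: "(complex \<Rightarrow> complex^'r^'r) \<Rightarrow> complex set \<Rightarrow> bool" where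
  "mat_analytic_on f S \<longleftrightarrow> (\<forall>i j. (\<lambda>z. f z $ i $ j) analytic_on S)"

definition Wfun :: "real \<Rightarrow> real \<Rightarrow> (complex \<Rightarrow> complex^'r^'r) \<Rightarrow> complex \<Rightarrow> complex^'r^'r" where
  "Wfun \<alpha> \<beta> H z = smat ((1 - z) powr (complex_of_real \<alpha>) * (1 + z) powr (complex_of_real \<beta>)) (H z)"

definition Vfun :: "real \<Rightarrow> real \<Rightarrow> (complex \<Rightarrow> complex^'r^'r) \<Rightarrow> ('r \<Rightarrow> complex \<Rightarrow> complex)
     \<Rightarrow> complex \<Rightarrow> complex^'r^'r" where
  "Vfun \<alpha> \<beta> Q sq z = smat ((z - 1) powr (complex_of_real (\<alpha>/2)) * (z + 1) powr (complex_of_real (\<beta>/2)))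
                         (Q z ** diag_mat (\<lambda>j. sq j z))"

definition slit1 :: "complex set" where
  "slit1 = {complex_of_real x | x. x \<le> 1}"

text \<open>Order of vanishing of an analytic function at 1 (0 if it does not vanish there).\<close>
definition vanish_order1 :: "(complex \<Rightarrow> complex) \<Rightarrow> nat" where
  "vanish_order1 f = nat (zorder f 1)"

end

(* Near 1 every factor of V is analytic off the cut (-oo,1]. By the identity theorem along the
   real interval to the left of 1, the factorisation H = Q Lambda Q^* continues to
   H(z) = Q(z) Lambda(z) Q(conj z)^*, and since sq_j is real on (1,1+eps) it has the reflection
   symmetry conj (sq_j (conj z)) = sq_j z. Hence V(z) D V(conj z)^* is
   (z-1)^alpha (z+1)^beta Q(z) diag((-1)^n_j lambda_j(z) D_j) Q(conj z)^*; rewriting (z-1)^alpha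
   as (1-z)^alpha costs a phase exp(+-alpha pi i), which D_j = exp(-+(alpha+n_j) pi i) cancels
   together with (-1)^n_j. On the interval, a continuous square root of a function with nonzero
   limit converges, so sq_j has boundary values l_j with |l_j|^2 = lambda_j(x) > 0, while the
   scalar prefactor of V tends to a number of squared modulus (1-x)^alpha (1+x)^beta; this is
   W = V_+ V_+^* = V_- V_-^*. *)

theory Submission
  imports Defs
begin

section \<open>Matrix identities\<close>

lemma matrix_diag_entry: "(A ** diag_mat d) $ i $ j = A $ i $ j * d j"
  by (simp add: matrix_matrix_mult_def diag_mat_def if_distrib sum.delta' cong: if_cong)

lemma matrix_adjoint_entry: "(A ** adjoint_mat B) $ i $ j = (\<Sum>k\<in>UNIV. A $ i $ k * cnj (B $ j $ k))"
  by (simp add: matrix_matrix_mult_def adjoint_mat_def)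

lemma matrix_diag_adjoint_entry:
  "(A ** diag_mat d ** adjoint_mat B) $ i $ j = (\<Sum>k\<in>UNIV. A $ i $ k * d k * cnj (B $ j $ k))"
  by (simp add: matrix_adjoint_entry matrix_diag_entry)

lemma smat_diag_adjoint:
  "smat c (A ** diag_mat d ** adjoint_mat B) = A ** diag_mat (\<lambda>k. c * d k) ** adjoint_mat B"
  by (simp add: vec_eq_iff smat_def matrix_diag_adjoint_entry sum_distrib_left mult_ac)

lemma smat_diag_mult_diag_adjoint:
  "smat c (A ** diag_mat d) ** diag_mat e ** adjoint_mat (smat c' (B ** diag_mat d')) =
   A ** diag_mat (\<lambda>k. c * cnj c' * (d k * e k * cnj (d' k))) ** adjoint_mat B"
  by (simp add: vec_eq_iff smat_def matrix_diag_adjoint_entry matrix_diag_entry mult_ac)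

lemma diag_mat_1: "diag_mat (\<lambda>_. 1) = mat 1"
  by (simp add: vec_eq_iff diag_mat_def mat_def)

lemma mat_analytic_on_subset: "mat_analytic_on f S \<Longrightarrow> T \<subseteq> S \<Longrightarrow> mat_analytic_on f T"
  unfolding mat_analytic_on_def using analytic_on_subset by blast

lemma unitary_mat_columns:
  "unitary_mat U \<Longrightarrow> (\<Sum>i\<in>UNIV. cnj (U $ i $ k) * U $ i $ m) = (if k = m then 1 else 0)"
  unfolding unitary_mat_def
  by (drule arg_cong[where f="\<lambda>A. A $ k $ m"]) (simp add: matrix_matrix_mult_def adjoint_mat_def mat_def)

lemma herm_pos_def_unitary_diag:
  assumes U: "unitary_mat U" and pd: "herm_pos_def (U ** diag_mat l ** adjoint_mat U)"
  shows "l k \<in> \<real>" and "0 < Re (l k)"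
proof -
  define v :: "complex^'a" where "v = (\<chi> i. U $ i $ k)"
  have "v \<noteq> 0"
  proof
    assume "v = 0"
    then have "(\<Sum>i\<in>UNIV. cnj (U $ i $ k) * U $ i $ k) = 0" by (simp add: v_def vec_eq_iff)
    with unitary_mat_columns[OF U, of k k] show False by simp
  qed
  let ?q = "\<Sum>i\<in>UNIV. \<Sum>j\<in>UNIV. cnj (v $ i) * (U ** diag_mat l ** adjoint_mat U) $ i $ j * v $ j"
  let ?c = "\<lambda>m m'. \<Sum>i\<in>UNIV. cnj (U $ i $ m) * U $ i $ m'"
  have "?q = (\<Sum>i\<in>UNIV. \<Sum>j\<in>UNIV. \<Sum>m\<in>UNIV. l m * (cnj (U $ i $ k) * U $ i $ m) * (cnj (U $ j $ m) * U $ j $ k))"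
    by (simp add: v_def matrix_diag_adjoint_entry sum_distrib_left sum_distrib_right mult_ac)
  also have "\<dots> = (\<Sum>m\<in>UNIV. \<Sum>i\<in>UNIV. \<Sum>j\<in>UNIV. l m * (cnj (U $ i $ k) * U $ i $ m) * (cnj (U $ j $ m) * U $ j $ k))"
    by (subst sum.swap) (intro sum.cong refl sum.swap)
  also have "\<dots> = (\<Sum>m\<in>UNIV. l m * (?c k m * ?c m k))"
    unfolding sum_product by (simp only: sum_distrib_left mult.assoc)
  also have "\<dots> = l k"
    by (simp add: unitary_mat_columns[OF U] if_distrib cong: if_cong)
  finally have "?q = l k" .
  moreover have "Im ?q = 0 \<and> 0 < Re ?q"
    using pd \<open>v \<noteq> 0\<close> unfolding herm_pos_def_def Let_def by blast
  ultimately show "l k \<in> \<real>" "0 < Re (l k)"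
    by (auto simp: complex_is_Real_iff)
qed

section \<open>The disk around 1 cut along the real axis\<close>

lemma slit1_eq: "slit1 = {z. Im z = 0 \<and> Re z \<le> 1}"
  unfolding slit1_def by (auto simp: complex_eq_iff intro: exI[of _ "Re z" for z])

lemma open_ball_minus_slit1: "open (ball 1 \<rho> - slit1)"
proof -
  have "closed slit1" unfolding slit1_eq
    by (intro closed_Collect_conj closed_Collect_eq closed_Collect_le continuous_intros)
  then show ?thesis by (intro open_Diff) auto
qed

lemma dist_one_of_real: "dist 1 (complex_of_real t) = \<bar>1 - t\<bar>"
  by (metis dist_of_real dist_real_def of_real_1)

lemma dist_one_cnj: "dist 1 (cnj z) = dist 1 z"
  by (metis complex_cnj_diff complex_cnj_one complex_mod_cnj dist_norm)

lemma cnj_ball_one: "cnj ` ball 1 \<rho> \<subseteq> ball 1 \<rho>"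
  by (auto simp: dist_one_cnj)

lemma cnj_ball_minus_slit1: "cnj ` (ball 1 \<rho> - slit1) \<subseteq> ball 1 \<rho> - slit1"
  using cnj_ball_one by (fastforce simp: slit1_eq)

lemma connected_ball_minus_slit1:
  assumes "0 < \<rho>" shows "connected (ball 1 \<rho> - slit1)"
proof (rule starlike_imp_connected, unfold starlike_def, intro bexI ballI)
  define a where "a = complex_of_real (1 + \<rho>/2)"
  show a: "a \<in> ball 1 \<rho> - slit1" using assms by (auto simp: a_def slit1_eq dist_norm)
  fix x assume x: "x \<in> ball 1 \<rho> - slit1"
  show "closed_segment a x \<subseteq> ball 1 \<rho> - slit1"
  proof
    fix w assume w: "w \<in> closed_segment a x"
    have "w \<in> ball 1 \<rho>"
      using convex_contains_segment[of "ball 1 \<rho>"] a x w by (meson DiffD1 convex_ball subsetD)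
    moreover have "w \<notin> slit1"
    proof
      assume ws: "w \<in> slit1"
      obtain u where u: "0 \<le> u" "u \<le> 1" "w = (1 - u) *\<^sub>R a + u *\<^sub>R x"
        using w unfolding closed_segment_def by auto
      have Im_w: "Im w = u * Im x" and Re_w: "Re w = (1 - u) * (1 + \<rho>/2) + u * Re x"
        using u by (auto simp: a_def)
      show False
      proof (cases "u = 0")
        case True then show ?thesis using Re_w ws assms by (auto simp: slit1_eq)
      next
        case False
        then have "Re x > 1" using Im_w ws x by (auto simp: slit1_eq)
        have "1 - u \<le> (1 - u) * (1 + \<rho>/2)" using u assms by (simp add: mult_le_cancel_left1)
        moreover have "u < u * Re x" using \<open>Re x > 1\<close> u False by (simp add: mult_less_cancel_left1)
        ultimately have "Re w > 1" using Re_w by linarith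
        then show False using ws by (auto simp: slit1_eq)
      qed
    qed
    ultimately show "w \<in> ball 1 \<rho> - slit1" by blast
  qed
qed

lemma ball_inter_slit1: "ball 1 \<rho> \<inter> slit1 \<subseteq> complex_of_real ` {1 - \<rho>..1}"
proof
  fix z assume z: "z \<in> ball 1 \<rho> \<inter> slit1"
  then have "z = complex_of_real (Re z)" "Re z \<le> 1" by (auto simp: slit1_eq complex_eq_iff)
  moreover have "\<bar>Re (1 - z)\<bar> < \<rho>"
    using z abs_Re_le_cmod[of "1 - z"] by (auto simp: dist_norm)
  ultimately show "z \<in> complex_of_real ` {1 - \<rho>..1}" by (intro image_eqI) auto
qed

section \<open>Identity theorem along a real interval\<close>

lemma of_real_islimpt_interval:
  assumes "a < b" shows "complex_of_real a islimpt (complex_of_real ` {a<..<b})"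
  unfolding islimpt_approachable
proof (intro allI impI)
  fix e :: real assume "0 < e"
  define t where "t = a + min (e/2) ((b - a)/2)"
  have "t \<in> {a<..<b}" "t \<noteq> a" "dist t a < e"
    using assms \<open>0 < e\<close> by (auto simp: t_def dist_real_def min_def field_simps)
  then show "\<exists>x'\<in>complex_of_real ` {a<..<b}. x' \<noteq> complex_of_real a \<and> dist x' (complex_of_real a) < e"
    by (intro bexI[of _ "complex_of_real t"]) (auto simp: dist_of_real)
qed

lemma holomorphic_eq_on_real_interval:
  assumes "f holomorphic_on S" "g holomorphic_on S" "open S" "connected S"
    and "a < b" "complex_of_real ` {a..<b} \<subseteq> S"
    and "\<And>t. a < t \<Longrightarrow> t < b \<Longrightarrow> f (complex_of_real t) = g (complex_of_real t)"
    and "z \<in> S"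
  shows "f z = g z"
proof -
  have "f z - g z = 0"
  proof (rule analytic_continuation[where f = "\<lambda>w. f w - g w", OF _ \<open>open S\<close> \<open>connected S\<close> _ _ of_real_islimpt_interval[OF \<open>a < b\<close>]])
    show "(\<lambda>w. f w - g w) holomorphic_on S" using assms(1,2) by (intro holomorphic_intros)
  qed (use assms(5-8) in auto)
  then show ?thesis by simp
qed

lemma cnj_cnj_eq_if_real_on_interval:
  assumes "f holomorphic_on S" "open S" "connected S" "cnj ` S \<subseteq> S"
    and "a < b" "complex_of_real ` {a..<b} \<subseteq> S"
    and "\<And>t. a < t \<Longrightarrow> t < b \<Longrightarrow> f (complex_of_real t) \<in> \<real>"
    and "z \<in> S"
  shows "cnj (f (cnj z)) = f z"
proof (rule holomorphic_eq_on_real_interval[OF _ assms(1-3,5,6) _ assms(8)])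
  have "f holomorphic_on cnj ` S" using assms(1,4) by (rule holomorphic_on_subset)
  from holomorphic_on_compose_cnj_cnj[OF this \<open>open S\<close>]
  show "(\<lambda>w. cnj (f (cnj w))) holomorphic_on S" by (simp add: o_def)
qed (use assms(7) in \<open>simp add: Reals_cnj_iff\<close>)

lemma cnj_cnj_eq_on_ball_minus_slit1:
  assumes "f analytic_on (N - slit1)" "ball 1 \<rho> \<subseteq> N" "0 < \<rho>"
    and "0 < \<epsilon>" "\<And>x. 1 < x \<Longrightarrow> x < 1 + \<epsilon> \<Longrightarrow> f (complex_of_real x) \<in> \<real>"
    and "z \<in> ball 1 \<rho> - slit1"
  shows "cnj (f (cnj z)) = f z"
proof -
  define e where "e = min \<epsilon> \<rho>"
  show ?thesis
    using assms
    by (intro cnj_cnj_eq_if_real_on_interval[of _ "ball 1 \<rho> - slit1" "1 + e/2" "1 + e"]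
        analytic_imp_holomorphic analytic_on_subset[OF assms(1)] open_ball_minus_slit1
        connected_ball_minus_slit1 cnj_ball_minus_slit1)
       (auto simp: e_def dist_one_of_real slit1_eq)
qed

lemma diag_factorization_continuation:
  fixes H Q :: "complex \<Rightarrow> complex^'r::finite^'r" and lam :: "'r \<Rightarrow> complex \<Rightarrow> complex"
  assumes "mat_analytic_on H S" "mat_analytic_on Q S" "\<And>j. lam j analytic_on S"
    and S: "open S" "connected S" "cnj ` S \<subseteq> S"
    and "a < b" "complex_of_real ` {a..<b} \<subseteq> S"
    and H_eq: "\<And>t. a < t \<Longrightarrow> t < b \<Longrightarrow> H (complex_of_real t)
       = Q (complex_of_real t) ** diag_mat (\<lambda>j. lam j (complex_of_real t)) ** adjoint_mat (Q (complex_of_real t))"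
    and "z \<in> S"
  shows "H z = Q z ** diag_mat (\<lambda>j. lam j z) ** adjoint_mat (Q (cnj z))"
proof -
  have hol: "(\<lambda>w. H w $ i $ j) holomorphic_on S" "(\<lambda>w. Q w $ i $ j) holomorphic_on S" "lam k holomorphic_on S"
    for i j k using assms(1-3) S(1) by (auto simp: mat_analytic_on_def analytic_on_open)
  have hol_cnj: "(\<lambda>w. cnj (Q (cnj w) $ i $ j)) holomorphic_on S" for i j
  proof -
    have "(\<lambda>w. Q w $ i $ j) holomorphic_on cnj ` S" using hol(2) S(3) by (rule holomorphic_on_subset)
    from holomorphic_on_compose_cnj_cnj[OF this S(1)] show ?thesis by (simp add: o_def)
  qed
  have "H z $ i $ j = (\<Sum>k\<in>UNIV. Q z $ i $ k * lam k z * cnj (Q (cnj z) $ j $ k))" for i j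
  proof (rule holomorphic_eq_on_real_interval[OF hol(1) _ S(1,2) assms(7,8) _ assms(10)])
    show "(\<lambda>w. \<Sum>k\<in>UNIV. Q w $ i $ k * lam k w * cnj (Q (cnj w) $ j $ k)) holomorphic_on S"
      by (intro holomorphic_intros hol hol_cnj)
  qed (simp add: H_eq matrix_diag_adjoint_entry)
  then show ?thesis by (simp add: vec_eq_iff matrix_diag_adjoint_entry)
qed

section \<open>Branches and boundary values\<close>

lemma powr_minus_nonreal:
  fixes w a :: complex
  assumes "Im w \<noteq> 0"
  shows "(- w) powr a = exp (- (complex_of_real (sgn (Im w)) * pi * \<i> * a)) * w powr a"
proof -
  have Ln_minus_w: "Ln (- w) = Ln w - complex_of_real (sgn (Im w)) * pi * \<i>"
    using assms by (subst Ln_minus) (auto simp: sgn_if)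
  have "(- w) powr a = exp (a * Ln (- w))" using assms by (auto simp: powr_def)
  also have "\<dots> = exp (- (complex_of_real (sgn (Im w)) * pi * \<i> * a)) * exp (a * Ln w)"
    by (simp only: Ln_minus_w) (simp add: algebra_simps flip: exp_add)
  also have "\<dots> = exp (- (complex_of_real (sgn (Im w)) * pi * \<i> * a)) * w powr a"
    using assms by (auto simp: powr_def)
  finally show ?thesis .
qed

lemma exp_sgn_pi_nat: "(\<sigma>::complex) \<in> {-1, 1} \<Longrightarrow> exp (\<sigma> * pi * \<i> * of_nat n) = (-1) ^ n"
  by (auto simp: exp_of_nat2_mult exp_minus)

lemma continuous_root_eq_branch:
  fixes \<phi> :: "real \<Rightarrow> complex"
  assumes "a < b" and cont: "continuous_on {a<..<b} \<phi>" and "L \<noteq> 0"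
    and Re_pos: "\<And>t. a < t \<Longrightarrow> t < b \<Longrightarrow> 0 < Re ((\<phi> t)\<^sup>2 / L)"
  shows "\<exists>c\<in>{1, -1}. \<forall>t. a < t \<and> t < b \<longrightarrow> \<phi> t = c * csqrt L * csqrt ((\<phi> t)\<^sup>2 / L)"
proof -
  define g where "g t = csqrt L * csqrt ((\<phi> t)\<^sup>2 / L)" for t
  have g_sq: "(g t)\<^sup>2 = (\<phi> t)\<^sup>2" for t
    using \<open>L \<noteq> 0\<close> by (simp add: g_def power_mult_distrib)
  have g_nz: "g t \<noteq> 0" if "a < t" "t < b" for t
    using Re_pos[OF that] \<open>L \<noteq> 0\<close> by (auto simp: g_def)
  have "continuous_on {a<..<b} (\<lambda>t. csqrt ((\<phi> t)\<^sup>2 / L))"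
    using Re_pos
    by (intro continuous_on_compose2[OF continuous_on_csqrt, of _ "\<lambda>t. (\<phi> t)\<^sup>2 / L"] continuous_intros cont)
       (fastforce simp: complex_nonpos_Reals_iff)+
  then have ratio_cont: "continuous_on {a<..<b} (\<lambda>t. \<phi> t / g t)"
    using g_nz unfolding g_def by (intro continuous_intros cont) auto
  have sign: "\<phi> t / g t \<in> {1, -1}" if "a < t" "t < b" for t
  proof -
    have "(\<phi> t / g t)\<^sup>2 = 1" using g_nz[OF that] by (simp add: power_divide flip: g_sq)
    then show ?thesis by (simp add: power2_eq_1_iff)
  qed
  then have "(\<lambda>t. \<phi> t / g t) ` {a<..<b} \<subseteq> {1, -1}"
    by (intro image_subsetI) auto
  then have "finite ((\<lambda>t. \<phi> t / g t) ` {a<..<b})"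
    by (rule finite_subset) simp
  with ratio_cont have "(\<lambda>t. \<phi> t / g t) constant_on {a<..<b}"
    by (rule continuous_finite_range_constant[OF connected_Ioo])
  then obtain c where c: "\<And>t. a < t \<Longrightarrow> t < b \<Longrightarrow> \<phi> t / g t = c"
    unfolding constant_on_def by auto
  have "c \<in> {1, -1}" using sign[of "(a + b)/2"] c[of "(a + b)/2"] \<open>a < b\<close> by auto
  moreover have "\<phi> t = c * g t" if "a < t" "t < b" for t
    using c[OF that] g_nz[OF that] by (simp add: field_simps)
  ultimately show ?thesis by (auto simp: g_def mult.assoc)
qed

lemma continuous_sqrt_tendsto_at_right:
  fixes \<phi> :: "real \<Rightarrow> complex"
  assumes "0 < r" and cont: "continuous_on {0<..<r} \<phi>"
    and lim: "((\<lambda>\<epsilon>. (\<phi> \<epsilon>)\<^sup>2) \<longlongrightarrow> L) (at_right 0)" and "L \<noteq> 0"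
  shows "\<exists>l. (\<phi> \<longlongrightarrow> l) (at_right 0) \<and> l\<^sup>2 = L"
proof -
  have lim1: "((\<lambda>\<epsilon>. (\<phi> \<epsilon>)\<^sup>2 / L) \<longlongrightarrow> 1) (at_right 0)"
    using tendsto_divide[OF lim tendsto_const[of L]] \<open>L \<noteq> 0\<close> by simp
  then obtain r' where "0 < r'" and r': "\<And>\<epsilon>. 0 < \<epsilon> \<Longrightarrow> \<epsilon> < r' \<Longrightarrow> dist ((\<phi> \<epsilon>)\<^sup>2 / L) 1 < 1"
    using tendstoD[OF lim1 zero_less_one] unfolding eventually_at_right_field by auto
  define s where "s = min r r'"
  have "0 < s" using \<open>0 < r\<close> \<open>0 < r'\<close> by (simp add: s_def)
  have Re_pos: "0 < Re ((\<phi> \<epsilon>)\<^sup>2 / L)" if "0 < \<epsilon>" "\<epsilon> < s" for \<epsilon>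
  proof -
    have "\<bar>Re ((\<phi> \<epsilon>)\<^sup>2 / L) - 1\<bar> \<le> cmod ((\<phi> \<epsilon>)\<^sup>2 / L - 1)"
      by (metis abs_Re_le_cmod minus_complex.simps(1) one_complex.simps(1))
    then show ?thesis using r'[of \<epsilon>] that by (simp add: s_def dist_norm)
  qed
  have "continuous_on {0<..<s} \<phi>" using cont by (rule continuous_on_subset) (auto simp: s_def)
  from continuous_root_eq_branch[OF \<open>0 < s\<close> this \<open>L \<noteq> 0\<close> Re_pos] obtain c where "c \<in> {1, -1}"
    and c: "\<forall>\<epsilon>. 0 < \<epsilon> \<and> \<epsilon> < s \<longrightarrow> \<phi> \<epsilon> = c * csqrt L * csqrt ((\<phi> \<epsilon>)\<^sup>2 / L)"
    by blast
  have "((\<lambda>\<epsilon>. c * csqrt L * csqrt ((\<phi> \<epsilon>)\<^sup>2 / L)) \<longlongrightarrow> c * csqrt L * csqrt 1) (at_right 0)"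
    by (intro tendsto_mult tendsto_const isCont_tendsto_compose[OF _ lim1])
       (simp add: continuous_at_csqrt complex_nonpos_Reals_iff)
  moreover have "eventually (\<lambda>\<epsilon>. c * csqrt L * csqrt ((\<phi> \<epsilon>)\<^sup>2 / L) = \<phi> \<epsilon>) (at_right 0)"
    unfolding eventually_at_right_field using \<open>0 < s\<close> c by (intro exI[of _ s]) auto
  ultimately have "(\<phi> \<longlongrightarrow> c * csqrt L) (at_right 0)"
    by (simp add: Lim_transform_eventually)
  moreover have "(c * csqrt L)\<^sup>2 = L" using \<open>c \<in> {1, -1}\<close> by (auto simp: power_mult_distrib)
  ultimately show ?thesis by blast
qed

lemma sqrt_branch_boundary_value:
  fixes \<gamma> :: "real \<Rightarrow> complex" and f g :: "complex \<Rightarrow> complex"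
  assumes "0 < r" and \<gamma>: "continuous_on {0<..<r} \<gamma>" "(\<gamma> \<longlongrightarrow> w) (at_right 0)"
    and \<gamma>_in: "\<And>\<epsilon>. 0 < \<epsilon> \<Longrightarrow> \<epsilon> < r \<Longrightarrow> \<gamma> \<epsilon> \<in> A"
    and "continuous_on A f" "isCont g w"
    and f_sq: "\<And>z. z \<in> A \<Longrightarrow> (f z)\<^sup>2 = (-1) ^ n * g z"
    and "g w \<in> \<real>" "0 < Re (g w)"
  shows "\<exists>l. ((\<lambda>\<epsilon>. f (\<gamma> \<epsilon>)) \<longlongrightarrow> l) (at_right 0) \<and> l * cnj l = g w"
proof -
  have "continuous_on {0<..<r} (\<lambda>\<epsilon>. f (\<gamma> \<epsilon>))"
    by (rule continuous_on_compose2[OF \<open>continuous_on A f\<close> \<gamma>(1)]) (use \<gamma>_in in auto)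
  moreover have "((\<lambda>\<epsilon>. (f (\<gamma> \<epsilon>))\<^sup>2) \<longlongrightarrow> (-1) ^ n * g w) (at_right 0)"
  proof (rule Lim_transform_eventually)
    show "((\<lambda>\<epsilon>. (-1) ^ n * g (\<gamma> \<epsilon>)) \<longlongrightarrow> (-1) ^ n * g w) (at_right 0)"
      by (intro tendsto_mult tendsto_const isCont_tendsto_compose[OF \<open>isCont g w\<close> \<gamma>(2)])
    show "eventually (\<lambda>\<epsilon>. (-1) ^ n * g (\<gamma> \<epsilon>) = (f (\<gamma> \<epsilon>))\<^sup>2) (at_right 0)"
      unfolding eventually_at_right_field using \<open>0 < r\<close> \<gamma>_in f_sq by (intro exI[of _ r]) auto
  qed
  moreover have "(-1) ^ n * g w \<noteq> 0" using \<open>0 < Re (g w)\<close> by auto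
  ultimately obtain l where l: "((\<lambda>\<epsilon>. f (\<gamma> \<epsilon>)) \<longlongrightarrow> l) (at_right 0)" "l\<^sup>2 = (-1) ^ n * g w"
    using continuous_sqrt_tendsto_at_right[OF \<open>0 < r\<close>] by blast
  have "complex_of_real ((cmod l)\<^sup>2) = complex_of_real (cmod (l\<^sup>2))" by (simp add: norm_power)
  also have "\<dots> = g w"
    using \<open>g w \<in> \<real>\<close> \<open>0 < Re (g w)\<close> by (auto simp: l(2) norm_mult norm_power elim!: Reals_cases)
  finally have "l * cnj l = g w" by (simp only: complex_norm_square)
  with l(1) show ?thesis by blast
qed

lemma tendsto_vertical_at_right:
  "((\<lambda>\<epsilon>::real. w + c * complex_of_real \<epsilon>) \<longlongrightarrow> w) (at_right 0)"
proof -
  have "((\<lambda>\<epsilon>::real. complex_of_real \<epsilon>) \<longlongrightarrow> 0) (at_right 0)"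
    using tendsto_of_real[OF tendsto_ident_at[of "0::real" "{0<..}"]] by simp
  then show ?thesis by (auto intro!: tendsto_eq_intros)
qed

section \<open>The matrix functions V and W\<close>

lemma mat_analytic_on_Vfun:
  assumes "mat_analytic_on Q S" "\<And>j. sq j analytic_on S" "S \<inter> slit1 = {}"
  shows "mat_analytic_on (Vfun \<alpha> \<beta> Q sq) S"
  unfolding mat_analytic_on_def
proof (intro allI)
  fix i k
  have "(\<lambda>z. (z - 1) powr complex_of_real (\<alpha>/2) * (z + 1) powr complex_of_real (\<beta>/2) * (Q z $ i $ k * sq k z))
      analytic_on S"
    using assms unfolding mat_analytic_on_def
    by (intro analytic_intros) (auto simp: complex_nonpos_Reals_iff slit1_eq)
  then show "(\<lambda>z. Vfun \<alpha> \<beta> Q sq z $ i $ k) analytic_on S"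
    by (simp add: Vfun_def smat_def matrix_diag_entry)
qed

lemma Wfun_eq_Vfun_diag_Vfun_cnj:
  fixes n :: "'r::finite \<Rightarrow> nat"
  assumes z: "Im z \<noteq> 0"
    and H_z: "H z = Q z ** diag_mat (\<lambda>k. lam k z) ** adjoint_mat (Q (cnj z))"
    and sq_cnj: "\<And>k. cnj (sq k (cnj z)) = sq k z"
    and sq_sq: "\<And>k. (sq k z)\<^sup>2 = (-1) ^ n k * lam k z"
    and D: "\<And>k. D k = exp (- complex_of_real (sgn (Im z)) * complex_of_real (\<alpha> + real (n k)) * pi * \<i>)"
  shows "Wfun \<alpha> \<beta> H z = Vfun \<alpha> \<beta> Q sq z ** diag_mat D ** adjoint_mat (Vfun \<alpha> \<beta> Q sq (cnj z))"
proof -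
  define s where "s = complex_of_real (sgn (Im z))"
  define p where "p w = (w - 1) powr complex_of_real (\<alpha>/2) * (w + 1) powr complex_of_real (\<beta>/2)" for w
  have cnj_powr_nonreal: "cnj (w powr a) = cnj w powr cnj a" if "Im w \<noteq> 0" for w a :: complex
    by (rule cnj_powr) (use that in auto)
  have "cnj (p (cnj z)) = p z"
    using z by (simp add: p_def cnj_powr_nonreal)
  then have "p z * cnj (p (cnj z)) = (z - 1) powr complex_of_real \<alpha> * (1 + z) powr complex_of_real \<beta>"
    by (simp add: p_def mult_ac add.commute[of z] flip: powr_add)
  also have "\<dots> = exp (s * pi * \<i> * \<alpha>) * ((1 - z) powr complex_of_real \<alpha> * (1 + z) powr complex_of_real \<beta>)"
    using powr_minus_nonreal[of "1 - z" \<alpha>] z by (simp add: s_def sgn_minus)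
  finally have prefactor: "p z * cnj (p (cnj z)) = \<dots>" .
  have "- s \<in> {-1, 1}" using z by (auto simp: s_def sgn_if)
  have phase: "exp (s * pi * \<i> * \<alpha>) * ((-1) ^ n k * exp (- s * complex_of_real (\<alpha> + real (n k)) * pi * \<i>)) = 1"
    for k
  proof -
    have "exp (- s * complex_of_real (\<alpha> + real (n k)) * pi * \<i>)
        = exp (- (s * pi * \<i> * \<alpha>)) * exp (- s * pi * \<i> * of_nat (n k))"
      by (simp add: algebra_simps flip: exp_add)
    also have "exp (- s * pi * \<i> * of_nat (n k)) = (-1) ^ n k"
      by (rule exp_sgn_pi_nat[OF \<open>- s \<in> {-1, 1}\<close>])
    finally show ?thesis by (simp add: exp_minus field_simps flip: power_add)
  qed
  show ?thesis
    unfolding Vfun_def p_def[symmetric] Wfun_def H_z smat_diag_adjoint smat_diag_mult_diag_adjoint D s_def[symmetric]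
  proof (rule arg_cong[where f = "\<lambda>d. Q z ** diag_mat d ** adjoint_mat (Q (cnj z))"], rule ext)
    fix k
    have "p z * cnj (p (cnj z)) * (sq k z * exp (- s * complex_of_real (\<alpha> + real (n k)) * pi * \<i>) * cnj (sq k (cnj z)))
      = (1 - z) powr complex_of_real \<alpha> * (1 + z) powr complex_of_real \<beta> * lam k z
        * (exp (s * pi * \<i> * \<alpha>) * ((-1) ^ n k * exp (- s * complex_of_real (\<alpha> + real (n k)) * pi * \<i>)))"
      by (simp add: prefactor sq_cnj sq_sq mult_ac flip: power2_eq_square)
    also have "\<dots> = (1 - z) powr complex_of_real \<alpha> * (1 + z) powr complex_of_real \<beta> * lam k z"
      by (simp only: phase mult_1_right)
    finally show "(1 - z) powr complex_of_real \<alpha> * (1 + z) powr complex_of_real \<beta> * lam k z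
      = p z * cnj (p (cnj z)) * (sq k z * exp (- s * complex_of_real (\<alpha> + real (n k)) * pi * \<i>) * cnj (sq k (cnj z)))"
      by (rule sym)
  qed
qed

lemma Vfun_prefactor_boundary_value:
  fixes x \<sigma> \<alpha> \<beta> :: real
  assumes \<sigma>: "\<sigma> \<in> {-1, 1}" and x: "-1 < x" "x < 1"
  defines "\<gamma> \<equiv> \<lambda>\<epsilon>. complex_of_real x + complex_of_real \<sigma> * \<i> * complex_of_real \<epsilon>"
  shows "\<exists>c. ((\<lambda>\<epsilon>. (\<gamma> \<epsilon> - 1) powr complex_of_real (\<alpha>/2) * (\<gamma> \<epsilon> + 1) powr complex_of_real (\<beta>/2)) \<longlongrightarrow> c)
               (at_right 0)
           \<and> c * cnj c = (1 - complex_of_real x) powr complex_of_real \<alpha> * (1 + complex_of_real x) powr complex_of_real \<beta>"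
proof -
  define a where "a = complex_of_real (\<alpha>/2)"
  define b where "b = complex_of_real (\<beta>/2)"
  define c where "c = exp (\<sigma> * pi * \<i> * a) * (1 - complex_of_real x) powr a * (complex_of_real x + 1) powr b"
  have "((\<lambda>\<epsilon>. exp (\<sigma> * pi * \<i> * a) * (1 - \<gamma> \<epsilon>) powr a * (\<gamma> \<epsilon> + 1) powr b) \<longlongrightarrow> c) (at_right 0)"
    unfolding c_def \<gamma>_def using x
    by (intro tendsto_intros tendsto_vertical_at_right) (auto simp: complex_nonpos_Reals_iff)
  moreover have "eventually (\<lambda>\<epsilon>. exp (\<sigma> * pi * \<i> * a) * (1 - \<gamma> \<epsilon>) powr a * (\<gamma> \<epsilon> + 1) powr b
      = (\<gamma> \<epsilon> - 1) powr a * (\<gamma> \<epsilon> + 1) powr b) (at_right 0)"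
    unfolding eventually_at_right_field using \<sigma> powr_minus_nonreal[of "1 - \<gamma> _" a]
    by (intro exI[of _ 1]) (auto simp: \<gamma>_def sgn_mult sgn_minus)
  ultimately have lim: "((\<lambda>\<epsilon>. (\<gamma> \<epsilon> - 1) powr a * (\<gamma> \<epsilon> + 1) powr b) \<longlongrightarrow> c) (at_right 0)"
    by (rule Lim_transform_eventually)
  have "cnj c = exp (- (\<sigma> * pi * \<i> * a)) * (1 - complex_of_real x) powr a * (complex_of_real x + 1) powr b"
    using x unfolding c_def a_def b_def by (simp add: exp_cnj cnj_powr)
  then have "c * cnj c = exp (\<sigma> * pi * \<i> * a) * exp (- (\<sigma> * pi * \<i> * a))
      * ((1 - complex_of_real x) powr a * (1 - complex_of_real x) powr a)
      * ((complex_of_real x + 1) powr b * (complex_of_real x + 1) powr b)"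
    by (simp add: c_def mult_ac)
  also have "\<dots> = (1 - complex_of_real x) powr complex_of_real \<alpha> * (1 + complex_of_real x) powr complex_of_real \<beta>"
    by (simp add: a_def b_def add.commute[of "complex_of_real x"] exp_minus flip: powr_add)
  finally show ?thesis using lim unfolding a_def b_def by blast
qed

lemma Vfun_boundary_value:
  fixes x \<sigma> :: real and H Q :: "complex \<Rightarrow> complex^'r::finite^'r"
    and lam sq :: "'r \<Rightarrow> complex \<Rightarrow> complex" and n :: "'r \<Rightarrow> nat"
  assumes \<sigma>: "\<sigma> \<in> {-1, 1}" and x: "-1 < x" "x < 1"
    and N: "open N" "complex_of_real x \<in> N"
    and sq_cont: "\<And>k. continuous_on (N - slit1) (sq k)"
    and sq_sq: "\<And>k z. z \<in> N - slit1 \<Longrightarrow> (sq k z)\<^sup>2 = (-1) ^ n k * lam k z"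
    and lam_cont: "\<And>k. isCont (lam k) (complex_of_real x)"
    and lam_real: "\<And>k. lam k (complex_of_real x) \<in> \<real>"
    and lam_pos: "\<And>k. 0 < Re (lam k (complex_of_real x))"
    and Q_cont: "\<And>i k. isCont (\<lambda>w. Q w $ i $ k) (complex_of_real x)"
    and H_x: "H (complex_of_real x) = Q (complex_of_real x) ** diag_mat (\<lambda>k. lam k (complex_of_real x))
                 ** adjoint_mat (Q (complex_of_real x))"
  shows "\<exists>V. ((\<lambda>\<epsilon>. Vfun \<alpha> \<beta> Q sq (complex_of_real x + complex_of_real \<sigma> * \<i> * complex_of_real \<epsilon>))
              \<longlongrightarrow> V) (at_right 0)
           \<and> Wfun \<alpha> \<beta> H (complex_of_real x) = V ** adjoint_mat V"
proof -
  define \<gamma> where "\<gamma> \<epsilon> = complex_of_real x + complex_of_real \<sigma> * \<i> * complex_of_real \<epsilon>" for \<epsilon>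
  have \<gamma>_lim: "(\<gamma> \<longlongrightarrow> complex_of_real x) (at_right 0)"
    unfolding \<gamma>_def by (rule tendsto_vertical_at_right)
  obtain r where "0 < r" "ball (complex_of_real x) r \<subseteq> N"
    using N open_contains_ball by blast
  have \<gamma>_in: "\<gamma> \<epsilon> \<in> N - slit1" if "0 < \<epsilon>" "\<epsilon> < r" for \<epsilon>
  proof -
    have "dist (complex_of_real x) (\<gamma> \<epsilon>) < r" using \<sigma> that by (auto simp: \<gamma>_def dist_norm norm_mult)
    moreover have "Im (\<gamma> \<epsilon>) \<noteq> 0" using \<sigma> that by (auto simp: \<gamma>_def)
    ultimately show ?thesis using \<open>ball (complex_of_real x) r \<subseteq> N\<close> by (auto simp: slit1_eq)
  qed
  have "continuous_on {0<..<r} \<gamma>" unfolding \<gamma>_def by (intro continuous_intros)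
  then have "\<exists>l. ((\<lambda>\<epsilon>. sq k (\<gamma> \<epsilon>)) \<longlongrightarrow> l) (at_right 0) \<and> l * cnj l = lam k (complex_of_real x)" for k
    by (intro sqrt_branch_boundary_value[OF \<open>0 < r\<close> _ \<gamma>_lim \<gamma>_in sq_cont lam_cont sq_sq lam_real lam_pos])
  then obtain l where l: "\<And>k. ((\<lambda>\<epsilon>. sq k (\<gamma> \<epsilon>)) \<longlongrightarrow> l k) (at_right 0)"
      "\<And>k. l k * cnj (l k) = lam k (complex_of_real x)"
    by metis
  obtain c where c: "((\<lambda>\<epsilon>. (\<gamma> \<epsilon> - 1) powr complex_of_real (\<alpha>/2) * (\<gamma> \<epsilon> + 1) powr complex_of_real (\<beta>/2)) \<longlongrightarrow> c)
      (at_right 0)"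
      "c * cnj c = (1 - complex_of_real x) powr complex_of_real \<alpha> * (1 + complex_of_real x) powr complex_of_real \<beta>"
    using Vfun_prefactor_boundary_value[OF \<sigma> x, of \<alpha> \<beta>] unfolding \<gamma>_def by blast
  define V :: "complex^'r^'r" where "V = smat c (Q (complex_of_real x) ** diag_mat l)"
  have lim: "((\<lambda>\<epsilon>. Vfun \<alpha> \<beta> Q sq (\<gamma> \<epsilon>)) \<longlongrightarrow> V) (at_right 0)"
  proof (intro vec_tendstoI)
    fix i k
    show "((\<lambda>\<epsilon>. Vfun \<alpha> \<beta> Q sq (\<gamma> \<epsilon>) $ i $ k) \<longlongrightarrow> V $ i $ k) (at_right 0)"
      unfolding Vfun_def V_def smat_def matrix_diag_entry vec_lambda_beta
      by (intro tendsto_mult c(1) l isCont_tendsto_compose[OF Q_cont \<gamma>_lim])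
  qed
  have "V ** adjoint_mat V = V ** diag_mat (\<lambda>_. 1) ** adjoint_mat V"
    by (simp add: diag_mat_1)
  also have "\<dots> = Q (complex_of_real x) ** diag_mat (\<lambda>k. c * cnj c * (l k * 1 * cnj (l k)))
      ** adjoint_mat (Q (complex_of_real x))"
    unfolding V_def by (rule smat_diag_mult_diag_adjoint)
  also have "\<dots> = Wfun \<alpha> \<beta> H (complex_of_real x)"
    unfolding Wfun_def H_x smat_diag_adjoint c(2) by (simp add: l(2))
  finally show ?thesis using lim unfolding \<gamma>_def by auto
qed

lemma Vfun_jump_relations:
  fixes x :: real and H Q :: "complex \<Rightarrow> complex^'r::finite^'r"
    and lam sq :: "'r \<Rightarrow> complex \<Rightarrow> complex" and n :: "'r \<Rightarrow> nat"
  assumes x: "-1 < x" "x < 1"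
    and N: "open N" "complex_of_real x \<in> N"
    and Q_an: "mat_analytic_on Q N" and lam_an: "\<And>k. lam k analytic_on N"
    and sq_an: "\<And>k. sq k analytic_on (N - slit1)"
    and sq_sq: "\<And>k z. z \<in> N - slit1 \<Longrightarrow> (sq k z)\<^sup>2 = (-1) ^ n k * lam k z"
    and lam_real: "\<And>k. lam k (complex_of_real x) \<in> \<real>"
    and lam_pos: "\<And>k. 0 < Re (lam k (complex_of_real x))"
    and H_x: "H (complex_of_real x) = Q (complex_of_real x) ** diag_mat (\<lambda>k. lam k (complex_of_real x))
                 ** adjoint_mat (Q (complex_of_real x))"
  shows "\<exists>Vp Vm. ((\<lambda>\<epsilon>::real. Vfun \<alpha> \<beta> Q sq (complex_of_real x + \<i> * complex_of_real \<epsilon>)) \<longlongrightarrow> Vp) (at_right 0)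
           \<and> ((\<lambda>\<epsilon>::real. Vfun \<alpha> \<beta> Q sq (complex_of_real x - \<i> * complex_of_real \<epsilon>)) \<longlongrightarrow> Vm) (at_right 0)
           \<and> Wfun \<alpha> \<beta> H (complex_of_real x) = Vm ** adjoint_mat Vm
           \<and> Wfun \<alpha> \<beta> H (complex_of_real x) = Vp ** adjoint_mat Vp"
proof -
  have "continuous_on (N - slit1) (sq k)" for k
    using sq_an by (simp add: analytic_imp_holomorphic holomorphic_on_imp_continuous_on)
  moreover have "isCont (lam k) (complex_of_real x)" for k
    using lam_an analytic_at_imp_isCont analytic_on_subset N(2) by blast
  moreover have "isCont (\<lambda>w. Q w $ i $ k) (complex_of_real x)" for i k
    using Q_an analytic_at_imp_isCont analytic_on_subset N(2) unfolding mat_analytic_on_def by blast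
  ultimately have boundary: "\<exists>V. ((\<lambda>\<epsilon>. Vfun \<alpha> \<beta> Q sq (complex_of_real x + complex_of_real \<sigma> * \<i> * complex_of_real \<epsilon>))
        \<longlongrightarrow> V) (at_right 0) \<and> Wfun \<alpha> \<beta> H (complex_of_real x) = V ** adjoint_mat V"
    if "\<sigma> \<in> {-1, 1}" for \<sigma>
    by (intro Vfun_boundary_value[where lam = lam and n = n and sq = sq and Q = Q and H = H, OF that x N _ sq_sq _ lam_real lam_pos _ H_x])
  then obtain Vp Vm where
    "((\<lambda>\<epsilon>. Vfun \<alpha> \<beta> Q sq (complex_of_real x + complex_of_real 1 * \<i> * complex_of_real \<epsilon>)) \<longlongrightarrow> Vp) (at_right 0)"
    "Wfun \<alpha> \<beta> H (complex_of_real x) = Vp ** adjoint_mat Vp"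
    "((\<lambda>\<epsilon>. Vfun \<alpha> \<beta> Q sq (complex_of_real x + complex_of_real (-1) * \<i> * complex_of_real \<epsilon>)) \<longlongrightarrow> Vm) (at_right 0)"
    "Wfun \<alpha> \<beta> H (complex_of_real x) = Vm ** adjoint_mat Vm"
    by (metis insertCI)
  then show ?thesis by (intro exI[of _ Vp] exI[of _ Vm]) simp
qed

theorem lemma3p4:
  fixes \<alpha> \<beta> :: real
    and H Q :: "complex \<Rightarrow> complex^'r::finite^'r"
    and lam sq :: "'r \<Rightarrow> complex \<Rightarrow> complex"
    and NH N :: "complex set"
  assumes alpha: "\<alpha> > -1" and beta: "\<beta> > -1"
    (* H analytic on a complex neighbourhood NH of [-1,1] *)
    and NH: "open NH" "complex_of_real ` {-1..1} \<subseteq> NH"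
    and H_an: "mat_analytic_on H NH"
    and H_hpd: "\<And>x::real. -1 < x \<Longrightarrow> x < 1 \<Longrightarrow> herm_pos_def (H (complex_of_real x))"
    and H_ends: "H 1 \<noteq> 0" "H (-1) \<noteq> 0"
    (* eigen-decomposition H = Q \<Lambda> Q* on [-1,1], Q, \<Lambda> analytic on convex neighbourhood N *)
    and N: "open N" "convex N" "complex_of_real ` {-1..1} \<subseteq> N"
    and Q_an: "mat_analytic_on Q N"
    and lam_an: "\<And>j. lam j analytic_on N"
    and Q_unit: "\<And>x::real. -1 \<le> x \<Longrightarrow> x \<le> 1 \<Longrightarrow> unitary_mat (Q (complex_of_real x))"
    and lam_real: "\<And>j (x::real). -1 \<le> x \<Longrightarrow> x \<le> 1 \<Longrightarrow> lam j (complex_of_real x) \<in> \<real>"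
    and H_eq: "\<And>x::real. -1 \<le> x \<Longrightarrow> x \<le> 1 \<Longrightarrow>
       H (complex_of_real x) = Q (complex_of_real x) ** diag_mat (\<lambda>j. lam j (complex_of_real x))
                                ** adjoint_mat (Q (complex_of_real x))"
    and lam_nz: "\<And>j z. z \<in> N \<Longrightarrow> z \<noteq> 1 \<Longrightarrow> z \<noteq> -1 \<Longrightarrow> lam j z \<noteq> 0"
    (* sq j is the analytic continuation to N \ (-\<infinity>,1] of the positive square root of
       (-1)^(n_j) lam_j on (1,1+\<epsilon>) *)
    and sq_an: "\<And>j. sq j analytic_on (N - slit1)"
    and sq_sq: "\<And>j z. z \<in> N - slit1 \<Longrightarrow> (sq j z)\<^sup>2 = (-1) ^ vanish_order1 (lam j) * lam j z"
    and sq_pos: "\<And>j. \<exists>\<epsilon>>0. \<forall>x::real. 1 < x \<and> x < 1 + \<epsilon> \<longrightarrow>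
                   sq j (complex_of_real x) \<in> \<real> \<and> Re (sq j (complex_of_real x)) > 0"
  shows "\<exists>\<delta>>0.
     mat_analytic_on (Vfun \<alpha> \<beta> Q sq) (ball 1 \<delta> - complex_of_real ` {1-\<delta>..1})
   \<and> (\<forall>x::real. 1 - \<delta> < x \<and> x < 1 \<longrightarrow>
        (\<exists>Vp Vm. ((\<lambda>\<epsilon>::real. Vfun \<alpha> \<beta> Q sq (complex_of_real x + \<i> * complex_of_real \<epsilon>)) \<longlongrightarrow> Vp) (at_right 0)
               \<and> ((\<lambda>\<epsilon>::real. Vfun \<alpha> \<beta> Q sq (complex_of_real x - \<i> * complex_of_real \<epsilon>)) \<longlongrightarrow> Vm) (at_right 0)
               \<and> Wfun \<alpha> \<beta> H (complex_of_real x) = Vm ** adjoint_mat Vm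
               \<and> Wfun \<alpha> \<beta> H (complex_of_real x) = Vp ** adjoint_mat Vp))
   \<and> (\<forall>z\<in>ball 1 \<delta>. Im z > 0 \<longrightarrow>
        Wfun \<alpha> \<beta> H z = Vfun \<alpha> \<beta> Q sq z
           ** diag_mat (\<lambda>j. exp (- complex_of_real (\<alpha> + real (vanish_order1 (lam j))) * complex_of_real pi * \<i>))
           ** adjoint_mat (Vfun \<alpha> \<beta> Q sq (cnj z)))
   \<and> (\<forall>z\<in>ball 1 \<delta>. Im z < 0 \<longrightarrow>
        Wfun \<alpha> \<beta> H z = Vfun \<alpha> \<beta> Q sq z
           ** diag_mat (\<lambda>j. exp (complex_of_real (\<alpha> + real (vanish_order1 (lam j))) * complex_of_real pi * \<i>))
           ** adjoint_mat (Vfun \<alpha> \<beta> Q sq (cnj z)))"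
proof -
  obtain \<rho> where \<rho>: "0 < \<rho>" "\<rho> \<le> 1" "ball 1 \<rho> \<subseteq> N" "ball 1 \<rho> \<subseteq> NH"
  proof -
    have "open (N \<inter> NH)" "1 \<in> N \<inter> NH" using N NH by force+
    then obtain r where "0 < r" "ball 1 r \<subseteq> N \<inter> NH" using open_contains_ball by blast
    then show ?thesis by (intro that[of "min 1 r"]) auto
  qed
  have H_ext: "H z = Q z ** diag_mat (\<lambda>j. lam j z) ** adjoint_mat (Q (cnj z))" if "z \<in> ball 1 \<rho>" for z
    using \<rho> that
    by (intro diag_factorization_continuation[of H "ball 1 \<rho>" Q lam "1 - \<rho>/2" 1]
        mat_analytic_on_subset[OF H_an] mat_analytic_on_subset[OF Q_an] analytic_on_subset[OF lam_an] H_eq)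
       (auto simp: dist_one_of_real cnj_ball_one)
  have sq_cnj: "cnj (sq k (cnj z)) = sq k z" if "z \<in> ball 1 \<rho> - slit1" for z k
  proof -
    obtain \<epsilon> where "0 < \<epsilon>" "\<forall>x. 1 < x \<and> x < 1 + \<epsilon> \<longrightarrow> sq k (complex_of_real x) \<in> \<real>"
      using sq_pos[of k] by blast
    then show ?thesis using \<rho> that by (intro cnj_cnj_eq_on_ball_minus_slit1[where \<rho> = \<rho> and \<epsilon> = \<epsilon>, OF sq_an]) auto
  qed
  have off_axis: "Wfun \<alpha> \<beta> H z = Vfun \<alpha> \<beta> Q sq z ** diag_mat D ** adjoint_mat (Vfun \<alpha> \<beta> Q sq (cnj z))"
    if "z \<in> ball 1 \<rho>" "Im z \<noteq> 0" "\<And>k. D k = exp (- complex_of_real (sgn (Im z))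
      * complex_of_real (\<alpha> + real (vanish_order1 (lam k))) * pi * \<i>)" for z D
    using that \<rho>
    by (intro Wfun_eq_Vfun_diag_Vfun_cnj[where n = "\<lambda>k. vanish_order1 (lam k)" and lam = lam] H_ext sq_cnj sq_sq)
       (auto simp: slit1_eq)
  show ?thesis
  proof (intro exI[of _ \<rho>] conjI allI impI ballI \<open>0 < \<rho>\<close>)
    show "mat_analytic_on (Vfun \<alpha> \<beta> Q sq) (ball 1 \<rho> - complex_of_real ` {1 - \<rho>..1})"
      using \<rho> ball_inter_slit1[of \<rho>]
      by (intro mat_analytic_on_Vfun mat_analytic_on_subset[OF Q_an] analytic_on_subset[OF sq_an]) auto
    show "\<exists>Vp Vm. ((\<lambda>\<epsilon>::real. Vfun \<alpha> \<beta> Q sq (complex_of_real x + \<i> * complex_of_real \<epsilon>)) \<longlongrightarrow> Vp) (at_right 0)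
        \<and> ((\<lambda>\<epsilon>::real. Vfun \<alpha> \<beta> Q sq (complex_of_real x - \<i> * complex_of_real \<epsilon>)) \<longlongrightarrow> Vm) (at_right 0)
        \<and> Wfun \<alpha> \<beta> H (complex_of_real x) = Vm ** adjoint_mat Vm
        \<and> Wfun \<alpha> \<beta> H (complex_of_real x) = Vp ** adjoint_mat Vp"
      if "1 - \<rho> < x \<and> x < 1" for x
      using that \<rho> N(3) herm_pos_def_unitary_diag[OF Q_unit, of x] H_hpd[of x] H_eq[of x]
      by (intro Vfun_jump_relations[where n = "\<lambda>k. vanish_order1 (lam k)", OF _ _ N(1) _ Q_an lam_an sq_an sq_sq])
         auto
  qed (rule off_axis; simp)+
qed

end
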